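(* Up to isomorphism there is exactly one $3$-e.c. graph that is the point graph of a partial geometry $pg(s,2,2)$ (with $s\ge2$): namely $s=7$ and the graph is the Latin square graph of the Cayley table of the group $\mathbb{Z}_2^3$, i.e. the graph with vertex set $\mathbb{Z}_2^3\times\mathbb{Z}_2^3$ in which distinct vertices $(a,b)$ and $(a',b')$ are adjacent iff $a=a'$ or $b=b'$ or $a+b=a'+b'$. In particular, if the point graph of some $pg(s,2,2)$ is $3$-e.c., then $s=7$ and it is isomorphic to this graph.
   Context: A partial geometry $pg(s,t,\alpha)$ is an incidence structure of points and lines such that any two distinct points lie on at most one common line, every line contains exactly $s+1$ points, every point lies on exactly $t+1$ lines, and for every point $p$ and line $L$ with $p$ not on $L$ there are exactly $\alpha$ lines through $p$ meeting $L$. The point graph has the points as vertices, two distinct points adjacent iff collinear. (A $pg(s,2,2)$ is equivalent to a Latin square of order $s+1$: points are the cells, and lines are the rows, columns and symbol classes.) A graph with vertex set $V$ is $n$-e.c. if for every pair of disjoint subsets $A,B\subseteq V$ with $|A\cup B|=n$ (either may be empty) there is a vertex $z\notin A\cup B$ adjacent to every vertex of $A$ and to no vertex of $B$. *)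

theory Defs
  imports Main
begin

text \<open>Partial geometry pg(s,t,alpha) with point set P and line set L, lines
  being sets of points (incidence = membership).  As usual for incidence
  structures, the geometry is finite and nonempty.\<close>
definition partial_geometry :: "'p set \<Rightarrow> 'p set set \<Rightarrow> nat \<Rightarrow> nat \<Rightarrow> nat \<Rightarrow> bool" where
  "partial_geometry P L s t \<alpha> \<longleftrightarrow>
     finite P \<and> P \<noteq> {} \<and> finite L \<and>
     (\<forall>M\<in>L. M \<subseteq> P) \<and>
     (\<forall>p\<in>P. \<forall>q\<in>P. p \<noteq> q \<longrightarrow> card {M\<in>L. p \<in> M \<and> q \<in> M} \<le> 1) \<and>
     (\<forall>M\<in>L. card M = s + 1) \<and>
     (\<forall>p\<in>P. card {M\<in>L. p \<in> M} = t + 1) \<and>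
     (\<forall>p\<in>P. \<forall>K\<in>L. p \<notin> K \<longrightarrow> card {M\<in>L. p \<in> M \<and> M \<inter> K \<noteq> {}} = \<alpha>)"

definition point_adj :: "'p set set \<Rightarrow> 'p \<Rightarrow> 'p \<Rightarrow> bool" where
  "point_adj L p q \<longleftrightarrow> p \<noteq> q \<and> (\<exists>M\<in>L. p \<in> M \<and> q \<in> M)"

definition n_ec :: "'a set \<Rightarrow> ('a \<Rightarrow> 'a \<Rightarrow> bool) \<Rightarrow> nat \<Rightarrow> bool" where
  "n_ec V E n \<longleftrightarrow>
     (\<forall>A B. A \<subseteq> V \<and> B \<subseteq> V \<and> A \<inter> B = {} \<and> finite (A \<union> B) \<and> card (A \<union> B) = n \<longrightarrow>
        (\<exists>z\<in>V. z \<notin> A \<union> B \<and> (\<forall>a\<in>A. E z a) \<and> (\<forall>b\<in>B. \<not> E z b)))"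

definition graph_iso :: "'a set \<Rightarrow> ('a \<Rightarrow> 'a \<Rightarrow> bool) \<Rightarrow> 'b set \<Rightarrow> ('b \<Rightarrow> 'b \<Rightarrow> bool) \<Rightarrow> bool" where
  "graph_iso V E W F \<longleftrightarrow>
     (\<exists>f. bij_betw f V W \<and> (\<forall>x\<in>V. \<forall>y\<in>V. E x y \<longleftrightarrow> F (f x) (f y)))"

text \<open>The group Z_2^3, elements as boolean triples, addition = componentwise xor.\<close>
type_synonym z2cube = "bool \<times> bool \<times> bool"

definition z2add :: "z2cube \<Rightarrow> z2cube \<Rightarrow> z2cube" where
  "z2add x y = (case x of (a1, a2, a3) \<Rightarrow> case y of (b1, b2, b3) \<Rightarrow>
                 (a1 \<noteq> b1, a2 \<noteq> b2, a3 \<noteq> b3))"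

definition ls_adj :: "z2cube \<times> z2cube \<Rightarrow> z2cube \<times> z2cube \<Rightarrow> bool" where
  "ls_adj u v = (case u of (a, b) \<Rightarrow> case v of (a', b') \<Rightarrow>
      (a, b) \<noteq> (a', b') \<and> (a = a' \<or> b = b' \<or> z2add a b = z2add a' b'))"

end

theory Submission
  imports Defs
begin

text \<open>
  The three lines through a base point of a pg(s,2,2) define three parallel classes
  (rows, columns, symbols), which turn the geometry into a 3-net: any two lines of different
  classes meet in exactly one point.  Using 3-e.c. for a triangle x, y, w, the unique common
  neighbour of x, y, w must close the quadrangle, so the net satisfies the quadrangle condition.
  Coordinatising the net by the base row G then makes G an elementary abelian 2-group and the
  point graph the Latin square graph of G.  Applying 3-e.c. to suitable triples shows that G is
  neither generated by two elements nor bigger than the span of three independent ones; hence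
  G = Z_2^3, s = 7, and the graph is the Latin square graph of Z_2^3.  Conversely, the Latin
  square geometry of Z_2^3 is a pg(7,2,2), and its graph is 3-e.c.: translations, coordinate
  swaps and linear maps reduce the check to triples (0, r, w) with r one of two representative
  vertices, which are settled by computation.
\<close>

lemma n_ec_cong:
  assumes "\<And>x y. x \<in> V \<Longrightarrow> y \<in> V \<Longrightarrow> E x y = E' x y"
  shows "n_ec V E n = n_ec V E' n"
proof -
  have "(\<forall>a\<in>A. E z a) = (\<forall>a\<in>A. E' z a)" "(\<forall>b\<in>B. \<not> E z b) = (\<forall>b\<in>B. \<not> E' z b)"
    if "z \<in> V" "A \<subseteq> V" "B \<subseteq> V" for z A B
    using that assms by blast+
  then show ?thesis unfolding n_ec_def by (smt (verit))
qed

lemma graph_iso_cong: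
  assumes "\<And>x y. x \<in> V \<Longrightarrow> y \<in> V \<Longrightarrow> E x y = E' x y"
  shows "graph_iso V E W F = graph_iso V E' W F"
  using assms unfolding graph_iso_def by auto

definition realizes_all :: "'a set \<Rightarrow> ('a \<Rightarrow> 'a \<Rightarrow> bool) \<Rightarrow> 'a \<Rightarrow> 'a \<Rightarrow> 'a \<Rightarrow> bool" where
  "realizes_all V E u v w \<longleftrightarrow>
     (\<forall>p q r. \<exists>z\<in>V. z \<notin> {u, v, w} \<and> E z u = p \<and> E z v = q \<and> E z w = r)"

lemma n_ec_3_iff:
  "n_ec V E 3 \<longleftrightarrow>
     (\<forall>u\<in>V. \<forall>v\<in>V. \<forall>w\<in>V. u \<noteq> v \<and> u \<noteq> w \<and> v \<noteq> w \<longrightarrow> realizes_all V E u v w)"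
proof
  assume ec: "n_ec V E 3"
  show "\<forall>u\<in>V. \<forall>v\<in>V. \<forall>w\<in>V. u \<noteq> v \<and> u \<noteq> w \<and> v \<noteq> w \<longrightarrow> realizes_all V E u v w"
  proof (intro ballI impI, unfold realizes_all_def, intro allI)
    fix u v w p q r assume V: "u \<in> V" "v \<in> V" "w \<in> V" and d: "u \<noteq> v \<and> u \<noteq> w \<and> v \<noteq> w"
    define A where "A = {x \<in> {u, v, w}. (x = u \<and> p) \<or> (x = v \<and> q) \<or> (x = w \<and> r)}"
    define B where "B = {u, v, w} - A"
    have "A \<union> B = {u, v, w}" unfolding A_def B_def by blast
    then have "A \<subseteq> V \<and> B \<subseteq> V \<and> A \<inter> B = {} \<and> finite (A \<union> B) \<and> card (A \<union> B) = 3"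
      using V d unfolding B_def by auto
    then obtain z where "z \<in> V" "z \<notin> {u, v, w}" "\<forall>a\<in>A. E z a" "\<forall>b\<in>B. \<not> E z b"
      using ec unfolding n_ec_def by (metis \<open>A \<union> B = {u, v, w}\<close>)
    then show "\<exists>z\<in>V. z \<notin> {u, v, w} \<and> E z u = p \<and> E z v = q \<and> E z w = r"
      using d unfolding A_def B_def by (intro bexI[of _ z]) auto
  qed
next
  assume all: "\<forall>u\<in>V. \<forall>v\<in>V. \<forall>w\<in>V. u \<noteq> v \<and> u \<noteq> w \<and> v \<noteq> w \<longrightarrow> realizes_all V E u v w"
  show "n_ec V E 3"
    unfolding n_ec_def
  proof (intro allI impI)
    fix A B assume AB: "A \<subseteq> V \<and> B \<subseteq> V \<and> A \<inter> B = {} \<and> finite (A \<union> B) \<and> card (A \<union> B) = 3"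
    then obtain u v w where uvw: "A \<union> B = {u, v, w}" "u \<noteq> v" "v \<noteq> w" "u \<noteq> w"
      unfolding card_3_iff by blast
    then have "realizes_all V E u v w" using all AB by blast
    then obtain z where z: "z \<in> V" "z \<notin> {u, v, w}"
      "E z u = (u \<in> A)" "E z v = (v \<in> A)" "E z w = (w \<in> A)"
      unfolding realizes_all_def by blast
    have "x \<in> A \<union> B \<Longrightarrow> E z x = (x \<in> A)" for x using z uvw(1) by auto
    then show "\<exists>z\<in>V. z \<notin> A \<union> B \<and> (\<forall>a\<in>A. E z a) \<and> (\<forall>b\<in>B. \<not> E z b)"
      using z(1,2) uvw(1) AB by (intro bexI[of _ z] conjI) blast+
  qed
qed

lemma n_ec_3D:
  assumes "n_ec V E 3" "u \<in> V" "v \<in> V" "w \<in> V" "u \<noteq> v" "u \<noteq> w" "v \<noteq> w"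
  shows "\<exists>z\<in>V. z \<notin> {u, v, w} \<and> E z u = p \<and> E z v = q \<and> E z w = r"
  using assms unfolding n_ec_3_iff realizes_all_def by blast

definition graph_aut :: "'a set \<Rightarrow> ('a \<Rightarrow> 'a \<Rightarrow> bool) \<Rightarrow> ('a \<Rightarrow> 'a) \<Rightarrow> bool" where
  "graph_aut V E h \<longleftrightarrow> bij_betw h V V \<and> (\<forall>x\<in>V. \<forall>y\<in>V. E (h x) (h y) = E x y)"

lemma graph_aut_comp: "graph_aut V E f \<Longrightarrow> graph_aut V E g \<Longrightarrow> graph_aut V E (f \<circ> g)"
  unfolding graph_aut_def by (auto intro: bij_betw_trans dest: bij_betwE)

lemma realizes_all_aut:
  assumes h: "graph_aut V E h" and uvw: "u \<in> V" "v \<in> V" "w \<in> V"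
    and r: "realizes_all V E u v w"
  shows "realizes_all V E (h u) (h v) (h w)"
  unfolding realizes_all_def
proof (intro allI)
  fix p q r
  obtain z where z: "z \<in> V" "z \<notin> {u, v, w}" "E z u = p" "E z v = q" "E z w = r"
    using r unfolding realizes_all_def by blast
  have "h z \<in> V" "h z \<notin> {h u, h v, h w}"
    using h z uvw unfolding graph_aut_def bij_betw_def inj_on_def by auto
  moreover have "E (h z) (h u) = p" "E (h z) (h v) = q" "E (h z) (h w) = r"
    using h z uvw unfolding graph_aut_def by auto
  ultimately show "\<exists>z\<in>V. z \<notin> {h u, h v, h w} \<and> E z (h u) = p \<and> E z (h v) = q \<and> E z (h w) = r"
    by blast
qed

lemma graph_iso_by_inverse:
  assumes g: "bij_betw g W V" and adj: "\<And>x y. x \<in> W \<Longrightarrow> y \<in> W \<Longrightarrow> E (g x) (g y) = F x y"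
  shows "graph_iso V E W F"
  unfolding graph_iso_def
proof (intro exI conjI ballI)
  let ?f = "the_inv_into W g"
  show "bij_betw ?f V W" using bij_betw_the_inv_into[OF g] .
  fix x y assume "x \<in> V" "y \<in> V"
  then show "E x y = F (?f x) (?f y)"
    using adj[of "?f x" "?f y"] g bij_betw_the_inv_into[OF g]
    by (metis bij_betw_apply bij_betw_def f_the_inv_into_f)
qed

section \<open>Elementary abelian 2-groups\<close>

text \<open>A group (on a carrier set) in which every element is its own inverse.  Both the
  additive group of the abstract coordinatisation and the concrete group Z_2^3 are instances.\<close>
locale boolean_group =
  fixes G :: "'a set" and add :: "'a \<Rightarrow> 'a \<Rightarrow> 'a" (infixl "\<oplus>" 65) and zero :: 'a
  assumes add_closed: "x \<in> G \<Longrightarrow> y \<in> G \<Longrightarrow> x \<oplus> y \<in> G"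
    and zero_closed: "zero \<in> G"
    and add_zero: "x \<in> G \<Longrightarrow> x \<oplus> zero = x"
    and add_self: "x \<in> G \<Longrightarrow> x \<oplus> x = zero"
    and add_comm: "x \<in> G \<Longrightarrow> y \<in> G \<Longrightarrow> x \<oplus> y = y \<oplus> x"
    and add_assoc: "x \<in> G \<Longrightarrow> y \<in> G \<Longrightarrow> z \<in> G \<Longrightarrow> (x \<oplus> y) \<oplus> z = x \<oplus> (y \<oplus> z)"
begin

lemma zero_add: "x \<in> G \<Longrightarrow> zero \<oplus> x = x"
  using add_comm add_zero zero_closed by metis

lemma add_cancel_right: "x \<in> G \<Longrightarrow> y \<in> G \<Longrightarrow> (x \<oplus> y) \<oplus> y = x"
  using add_assoc add_self add_zero by metis

lemma add_cancel_left: "x \<in> G \<Longrightarrow> y \<in> G \<Longrightarrow> x \<oplus> (x \<oplus> y) = y"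
  using add_assoc add_self zero_add by metis

lemma add_eq_zero_iff: "x \<in> G \<Longrightarrow> y \<in> G \<Longrightarrow> x \<oplus> y = zero \<longleftrightarrow> x = y"
  using add_cancel_right add_self zero_add by metis

lemma add_left_inj: "x \<in> G \<Longrightarrow> y \<in> G \<Longrightarrow> z \<in> G \<Longrightarrow> x \<oplus> y = x \<oplus> z \<longleftrightarrow> y = z"
  using add_cancel_left by metis

lemma add_medial:
  "a \<in> G \<Longrightarrow> b \<in> G \<Longrightarrow> c \<in> G \<Longrightarrow> d \<in> G \<Longrightarrow> (a \<oplus> b) \<oplus> (c \<oplus> d) = (a \<oplus> c) \<oplus> (b \<oplus> d)"
  using add_assoc add_comm add_closed by metis

definition span2 :: "'a \<Rightarrow> 'a \<Rightarrow> 'a set" where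
  "span2 a b = {zero, a, b, a \<oplus> b}"

definition independent3 :: "'a \<Rightarrow> 'a \<Rightarrow> 'a \<Rightarrow> bool" where
  "independent3 a b c \<longleftrightarrow> a \<noteq> zero \<and> b \<notin> {zero, a} \<and> c \<notin> span2 a b"

definition sel :: "bool \<Rightarrow> 'a \<Rightarrow> 'a" where
  "sel t a = (if t then a else zero)"

definition comb :: "'a \<Rightarrow> 'a \<Rightarrow> 'a \<Rightarrow> z2cube \<Rightarrow> 'a" where
  "comb a b c x = (case x of (x1, x2, x3) \<Rightarrow> sel x1 a \<oplus> sel x2 b \<oplus> sel x3 c)"

lemma sel_closed: "a \<in> G \<Longrightarrow> sel t a \<in> G"
  unfolding sel_def using zero_closed by simp

lemma sel_add: "a \<in> G \<Longrightarrow> sel t a \<oplus> sel t' a = sel (t \<noteq> t') a"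
  unfolding sel_def using add_self add_zero zero_add zero_closed by auto

lemma comb_closed: "a \<in> G \<Longrightarrow> b \<in> G \<Longrightarrow> c \<in> G \<Longrightarrow> comb a b c x \<in> G"
  unfolding comb_def using sel_closed add_closed by (auto split: prod.splits)

lemma comb_values:
  assumes "a \<in> G" "b \<in> G" "c \<in> G"
  shows "comb a b c (False, False, False) = zero" "comb a b c (True, False, False) = a"
    "comb a b c (False, True, False) = b" "comb a b c (True, True, False) = a \<oplus> b"
    "comb a b c (False, False, True) = c" "comb a b c (True, False, True) = a \<oplus> c"
    "comb a b c (False, True, True) = b \<oplus> c" "comb a b c (True, True, True) = a \<oplus> b \<oplus> c"
  unfolding comb_def sel_def using assms zero_closed add_closed by (simp_all add: add_zero zero_add)

lemma comb_add:
  assumes G: "a \<in> G" "b \<in> G" "c \<in> G"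
  shows "comb a b c (z2add x y) = comb a b c x \<oplus> comb a b c y"
proof -
  obtain x1 x2 x3 y1 y2 y3 where xy: "x = (x1, x2, x3)" "y = (y1, y2, y3)"
    by (cases x; cases y) auto
  have S: "sel t a \<in> G" "sel t b \<in> G" "sel t c \<in> G" for t using G sel_closed by auto
  have "comb a b c x \<oplus> comb a b c y =
      ((sel x1 a \<oplus> sel x2 b) \<oplus> (sel y1 a \<oplus> sel y2 b)) \<oplus> (sel x3 c \<oplus> sel y3 c)"
    unfolding xy comb_def using add_medial S add_closed by simp
  also have "\<dots> = ((sel x1 a \<oplus> sel y1 a) \<oplus> (sel x2 b \<oplus> sel y2 b)) \<oplus> (sel x3 c \<oplus> sel y3 c)"
    using add_medial S by simp
  also have "\<dots> = comb a b c (z2add x y)"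
    unfolding xy comb_def z2add_def using sel_add G by simp
  finally show ?thesis by simp
qed

lemma extend_independent:
  assumes "4 < card G" "a \<in> G" "a \<noteq> zero" "b \<in> G" "b \<notin> {zero, a}"
  shows "\<exists>c\<in>G. independent3 a b c"
proof -
  have "card (span2 a b) \<le> 4"
    using card_length[of "[zero, a, b, a \<oplus> b]"] unfolding span2_def by simp
  moreover have "finite (span2 a b)" unfolding span2_def by simp
  ultimately have "\<not> G \<subseteq> span2 a b" using assms(1) card_mono[of "span2 a b" G] by auto
  then show ?thesis using assms(3,5) unfolding independent3_def by blast
qed

lemma comb_inj:
  assumes G: "a \<in> G" "b \<in> G" "c \<in> G" and ind: "independent3 a b c"
  shows "inj (comb a b c)"
proof (rule injI)
  fix x y assume "comb a b c x = comb a b c y"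
  then have zero: "comb a b c (z2add x y) = zero"
    using comb_add[OF G] add_self comb_closed[OF G] by metis
  have "a \<oplus> b \<noteq> zero" "a \<oplus> c \<noteq> zero" "b \<oplus> c \<noteq> zero" "a \<oplus> b \<oplus> c \<noteq> zero"
    using ind G add_closed unfolding independent3_def span2_def
    by (auto simp: add_eq_zero_iff)
  moreover obtain w1 w2 w3 where w: "z2add x y = (w1, w2, w3)"
    by (cases "z2add x y") auto
  ultimately have "\<not> w1 \<and> \<not> w2 \<and> \<not> w3"
    using zero ind comb_values[OF G] unfolding independent3_def span2_def
    by (cases w1; cases w2; cases w3) auto
  then have "z2add x y = (False, False, False)" using w by simp
  then show "x = y" unfolding z2add_def by (cases x; cases y) auto
qed

lemma outside_span3_distinct:
  assumes G: "a \<in> G" "b \<in> G" "c \<in> G" "d \<in> G" and ind: "independent3 a b c"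
    and out: "d \<notin> range (comb a b c)"
  shows "distinct [zero, a, b, c, a \<oplus> b, d, c \<oplus> d]"
proof -
  define ws where "ws = [(False, False, False), (True, False, False), (False, True, False),
    (False, False, True), (True, True, False)]"
  have ws: "map (comb a b c) ws = [zero, a, b, c, a \<oplus> b]"
    unfolding ws_def by (simp add: comb_values[OF G(1-3)])
  have "distinct (map (comb a b c) ws)"
    unfolding ws_def by (simp add: inj_eq[OF comb_inj[OF G(1-3) ind]])
  then have "distinct [zero, a, b, c, a \<oplus> b]" unfolding ws .
  moreover have "d \<notin> set [zero, a, b, c, a \<oplus> b]"
    using out unfolding ws[symmetric] by auto
  moreover have "c \<oplus> d \<notin> set [zero, a, b, c, a \<oplus> b]"
  proof
    assume "c \<oplus> d \<in> set [zero, a, b, c, a \<oplus> b]"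
    then obtain w where "c \<oplus> d = comb a b c w" unfolding ws[symmetric] by auto
    then have "d = comb a b c (z2add (False, False, True) w)"
      using add_cancel_left G comb_values(5)[OF G(1-3)] comb_add[OF G(1-3)] by metis
    then show False using out by (metis rangeI)
  qed
  moreover have "d \<noteq> c \<oplus> d"
    using ind add_cancel_right add_self G unfolding independent3_def span2_def by (metis insertCI)
  ultimately show ?thesis by auto
qed

text \<open>In the Latin square graph of the group, the vertices (0,0), (a,b), (c,d) have no common
  neighbour (k,g) when 0, a, b, c, a+b, d, c+d are distinct: each of the ways of being adjacent
  to all three identifies two of these elements.\<close>
lemma no_common_neighbour:
  assumes G: "a \<in> G" "b \<in> G" "c \<in> G" "d \<in> G" "k \<in> G" "g \<in> G"
    and dist: "distinct [zero, a, b, c, a \<oplus> b, d, c \<oplus> d]"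
    and adj0: "(k, g) \<noteq> (zero, zero)" "k = zero \<or> g = zero \<or> k \<oplus> g = zero"
    and adj1: "k = a \<or> g = b \<or> k \<oplus> g = a \<oplus> b"
    and adj2: "k = c \<or> g = d \<or> k \<oplus> g = c \<oplus> d"
  shows False
proof -
  have sums: "a \<oplus> (a \<oplus> b) = b" "c \<oplus> (c \<oplus> d) = d" "(a \<oplus> b) \<oplus> b = a" "(c \<oplus> d) \<oplus> d = c"
    using add_cancel_left add_cancel_right G by auto
  consider "k = zero" "g \<noteq> zero" | "g = zero" "k \<noteq> zero" | "k = g" "k \<noteq> zero"
    using adj0 add_eq_zero_iff G by blast
  then show False
  proof cases
    case 1
    then have "g = b \<or> g = a \<oplus> b" "g = d \<or> g = c \<oplus> d"
      using adj1 adj2 dist zero_add G by auto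
    then show False using dist by auto
  next
    case 2
    then have "k = a \<or> k = a \<oplus> b" "k = c \<or> k = c \<oplus> d"
      using adj1 adj2 dist add_zero G by auto
    then show False using dist by auto
  next
    case 3
    then have "k = a \<or> k = b" "k = c \<or> k = d"
      using adj1 adj2 dist add_self G sums by auto
    then show False using dist by auto
  qed
qed

end

section \<open>3-nets and their coordinatisation\<close>

text \<open>A 3-net on the point set P is given by three parallel classes, encoded by maps sending a
  point to its row, column and symbol line; two lines of different classes meet in exactly one
  point.\<close>
definition net_adj :: "('p \<Rightarrow> 'q) \<Rightarrow> ('p \<Rightarrow> 'q) \<Rightarrow> ('p \<Rightarrow> 'q) \<Rightarrow> 'p \<Rightarrow> 'p \<Rightarrow> bool" where
  "net_adj fr fc fs p q \<longleftrightarrow> p \<noteq> q \<and> (fr p = fr q \<or> fc p = fc q \<or> fs p = fs q)"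

locale three_net =
  fixes P :: "'p set" and fr fc fs :: "'p \<Rightarrow> 'q" and z0 :: 'p
  assumes z0_in: "z0 \<in> P"
    and uniq_rc: "\<And>p q. p \<in> P \<Longrightarrow> q \<in> P \<Longrightarrow> fr p = fr q \<Longrightarrow> fc p = fc q \<Longrightarrow> p = q"
    and uniq_rs: "\<And>p q. p \<in> P \<Longrightarrow> q \<in> P \<Longrightarrow> fr p = fr q \<Longrightarrow> fs p = fs q \<Longrightarrow> p = q"
    and uniq_cs: "\<And>p q. p \<in> P \<Longrightarrow> q \<in> P \<Longrightarrow> fc p = fc q \<Longrightarrow> fs p = fs q \<Longrightarrow> p = q"
    and meet_rc: "\<And>p q. p \<in> P \<Longrightarrow> q \<in> P \<Longrightarrow> \<exists>x\<in>P. fr x = fr p \<and> fc x = fc q"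
    and meet_rs: "\<And>p q. p \<in> P \<Longrightarrow> q \<in> P \<Longrightarrow> \<exists>x\<in>P. fr x = fr p \<and> fs x = fs q"
    and meet_sc: "\<And>p q. p \<in> P \<Longrightarrow> q \<in> P \<Longrightarrow> \<exists>x\<in>P. fs x = fs p \<and> fc x = fc q"
begin

abbreviation nadj :: "'p \<Rightarrow> 'p \<Rightarrow> bool" where
  "nadj \<equiv> net_adj fr fc fs"

text \<open>The point z
  is the unique common neighbour of x, y, w that is collinear with none of them along the
  "obvious" lines; 3-e.c. provides a common neighbour, and it must be z.\<close>
lemma quadrangle_from_ec:
  assumes ec: "n_ec P nadj 3"
    and P: "x \<in> P" "y \<in> P" "w \<in> P" "z \<in> P"
    and h: "fr x = fr y" "fc x = fc w" "fs y = fs w" "fr z = fr w" "fc z = fc y"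
  shows "fs z = fs x"
proof (cases "x \<noteq> y \<and> x \<noteq> w \<and> y \<noteq> w")
  case False
  then have "x = y \<and> x = w" using uniq_rc uniq_rs uniq_cs P h by metis
  then show ?thesis using uniq_rc P h by metis
next
  case True
  then obtain z' where z': "z' \<in> P" "z' \<notin> {x, y, w}" "nadj z' x" "nadj z' y" "nadj z' w"
    using n_ec_3D[OF ec P(1-3), of True True True] by blast
  then have a: "fr z' = fr x \<or> fc z' = fc x \<or> fs z' = fs x"
    "fr z' = fr y \<or> fc z' = fc y \<or> fs z' = fs y" "fr z' = fr w \<or> fc z' = fc w \<or> fs z' = fs w"
    and nz: "z' \<noteq> x" "z' \<noteq> y" "z' \<noteq> w"
    unfolding net_adj_def by auto
  have row: "fr z' \<noteq> fr x"
  proof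
    assume r: "fr z' = fr x"
    have "fr x \<noteq> fr w" using uniq_rc[OF P(1) P(3)] h True by metis
    moreover have "fc z' \<noteq> fc w" using uniq_rc[OF z'(1) P(1)] r h nz by metis
    moreover have "fs z' \<noteq> fs w" using uniq_rs[OF z'(1) P(2)] r h nz by metis
    ultimately show False using a(3) r by metis
  qed
  have col: "fc z' \<noteq> fc x"
  proof
    assume c: "fc z' = fc x"
    have "fr z' \<noteq> fr y" using uniq_rc[OF z'(1) P(1)] c h nz by metis
    moreover have "fc x \<noteq> fc y" using uniq_rc[OF P(1) P(2)] h True by metis
    moreover have "fs z' \<noteq> fs y" using uniq_cs[OF z'(1) P(3)] c h nz by metis
    ultimately show False using a(2) c by metis
  qed
  have sym: "fs z' = fs x" using a(1) row col by blast
  have "fs x \<noteq> fs y" using uniq_rs[OF P(1) P(2)] h True by metis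
  then have "fc z' = fc y" "fr z' = fr w" using a(2,3) row col h sym by metis+
  then have "z' = z" using uniq_rc[OF z'(1) P(4)] h by metis
  then show ?thesis using sym by simp
qed

end

text \<open>A 3-net in which all quadrangles close: it is the Cayley table of a Boolean group.\<close>
locale boolean_net = three_net P fr fc fs z0
  for P :: "'p set" and fr fc fs :: "'p \<Rightarrow> 'q" and z0 :: 'p +
  assumes quadrangle: "\<And>x y w z. x \<in> P \<Longrightarrow> y \<in> P \<Longrightarrow> w \<in> P \<Longrightarrow> z \<in> P \<Longrightarrow>
      fr x = fr y \<Longrightarrow> fc x = fc w \<Longrightarrow> fs y = fs w \<Longrightarrow> fr z = fr w \<Longrightarrow> fc z = fc y \<Longrightarrow> fs z = fs x"
begin

definition rc :: "'p \<Rightarrow> 'p \<Rightarrow> 'p" where "rc a b = (THE x. x \<in> P \<and> fr x = fr a \<and> fc x = fc b)"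
definition rs :: "'p \<Rightarrow> 'p \<Rightarrow> 'p" where "rs a b = (THE x. x \<in> P \<and> fr x = fr a \<and> fs x = fs b)"
definition sc :: "'p \<Rightarrow> 'p \<Rightarrow> 'p" where "sc a b = (THE x. x \<in> P \<and> fs x = fs a \<and> fc x = fc b)"

lemma rc_eq:
  assumes "a \<in> P" "b \<in> P" "x \<in> P" "fr x = fr a" "fc x = fc b" shows "rc a b = x"
  unfolding rc_def using assms uniq_rc by (intro the_equality) auto
lemma rs_eq:
  assumes "a \<in> P" "b \<in> P" "x \<in> P" "fr x = fr a" "fs x = fs b" shows "rs a b = x"
  unfolding rs_def using assms uniq_rs by (intro the_equality) auto
lemma sc_eq:
  assumes "a \<in> P" "b \<in> P" "x \<in> P" "fs x = fs a" "fc x = fc b" shows "sc a b = x"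
  unfolding sc_def using assms uniq_cs by (intro the_equality) auto

lemma rc_prop: "a \<in> P \<Longrightarrow> b \<in> P \<Longrightarrow> rc a b \<in> P \<and> fr (rc a b) = fr a \<and> fc (rc a b) = fc b"
  using meet_rc rc_eq by metis
lemma rs_prop: "a \<in> P \<Longrightarrow> b \<in> P \<Longrightarrow> rs a b \<in> P \<and> fr (rs a b) = fr a \<and> fs (rs a b) = fs b"
  using meet_rs rs_eq by metis
lemma sc_prop: "a \<in> P \<Longrightarrow> b \<in> P \<Longrightarrow> sc a b \<in> P \<and> fs (sc a b) = fs a \<and> fc (sc a b) = fc b"
  using meet_sc sc_eq by metis

text \<open>Coordinates: the base row G through z0 serves as coordinate set.\<close>
definition G :: "'p set" where "G = {x \<in> P. fr x = fr z0}"
definition colc :: "'p \<Rightarrow> 'p" where "colc p = rc z0 p"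
definition symc :: "'p \<Rightarrow> 'p" where "symc p = rs z0 p"
definition rowc :: "'p \<Rightarrow> 'p" where "rowc p = rs z0 (rc p z0)"
definition point_at :: "'p \<Rightarrow> 'p \<Rightarrow> 'p" where "point_at x y = rc (sc x z0) y"

definition add :: "'p \<Rightarrow> 'p \<Rightarrow> 'p" (infixl "\<oplus>" 65) where "x \<oplus> y = symc (point_at x y)"

lemma G_sub: "x \<in> G \<Longrightarrow> x \<in> P" and G_row: "x \<in> G \<Longrightarrow> fr x = fr z0"
  unfolding G_def by auto

lemma z0_G: "z0 \<in> G"
  using z0_in unfolding G_def by auto

lemma coords_G: "p \<in> P \<Longrightarrow> colc p \<in> G" "p \<in> P \<Longrightarrow> symc p \<in> G" "p \<in> P \<Longrightarrow> rowc p \<in> G"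
  unfolding colc_def symc_def rowc_def G_def using rc_prop rs_prop z0_in by auto

lemma colc_eq_iff: assumes "p \<in> P" "q \<in> P" shows "colc p = colc q \<longleftrightarrow> fc p = fc q"
  unfolding colc_def using rc_prop[OF z0_in] rc_eq[OF z0_in] assms by metis

lemma symc_eq_iff: assumes "p \<in> P" "q \<in> P" shows "symc p = symc q \<longleftrightarrow> fs p = fs q"
  unfolding symc_def using rs_prop[OF z0_in] rs_eq[OF z0_in] assms by metis

lemma rowc_eq_iff: assumes "p \<in> P" "q \<in> P" shows "rowc p = rowc q \<longleftrightarrow> fr p = fr q"
proof -
  have a: "rc p z0 \<in> P" "fr (rc p z0) = fr p" "fc (rc p z0) = fc z0"
    and b: "rc q z0 \<in> P" "fr (rc q z0) = fr q" "fc (rc q z0) = fc z0"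
    using rc_prop assms z0_in by auto
  have "rowc p = rowc q \<longleftrightarrow> fs (rc p z0) = fs (rc q z0)"
    unfolding rowc_def using symc_eq_iff[OF a(1) b(1)] unfolding symc_def .
  also have "\<dots> \<longleftrightarrow> rc p z0 = rc q z0" using uniq_cs a b by metis
  also have "\<dots> \<longleftrightarrow> fr p = fr q" using a b rc_eq[OF assms(1) z0_in b(1)] by metis
  finally show ?thesis .
qed

lemma coords_determine_point: "p \<in> P \<Longrightarrow> q \<in> P \<Longrightarrow> rowc p = rowc q \<Longrightarrow> colc p = colc q \<Longrightarrow> p = q"
  using rowc_eq_iff colc_eq_iff uniq_rc by metis

lemma coords_of_base: "x \<in> G \<Longrightarrow> rowc x = z0" "x \<in> G \<Longrightarrow> colc x = x" "x \<in> G \<Longrightarrow> symc x = x"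
proof -
  assume x: "x \<in> G"
  have "rc x z0 = z0" using rc_eq[OF G_sub[OF x] z0_in z0_in] G_row[OF x] by simp
  then show "rowc x = z0" unfolding rowc_def using rs_eq[OF z0_in z0_in z0_in] by simp
  show "colc x = x" unfolding colc_def using rc_eq[OF z0_in G_sub G_sub] G_row x by metis
  show "symc x = x" unfolding symc_def using rs_eq[OF z0_in G_sub G_sub] G_row x by metis
qed

lemma point_at_coords:
  assumes "x \<in> G" "y \<in> G"
  shows "point_at x y \<in> P" "rowc (point_at x y) = x" "colc (point_at x y) = y"
proof -
  have xP: "x \<in> P" and yP: "y \<in> P" using assms G_sub by auto
  have s: "sc x z0 \<in> P" "fs (sc x z0) = fs x" "fc (sc x z0) = fc z0" using sc_prop[OF xP z0_in] by auto
  have p: "point_at x y \<in> P" "fr (point_at x y) = fr (sc x z0)" "fc (point_at x y) = fc y"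
    using rc_prop[OF s(1) yP] unfolding point_at_def by auto
  then show "point_at x y \<in> P" by simp
  have "rc (point_at x y) z0 = sc x z0" using rc_eq[OF p(1) z0_in s(1)] p s by simp
  moreover have "rs z0 (sc x z0) = x" using rs_eq[OF z0_in s(1) xP] G_row[OF assms(1)] s by simp
  ultimately show "rowc (point_at x y) = x" unfolding rowc_def by simp
  show "colc (point_at x y) = y"
    unfolding colc_def using rc_eq[OF z0_in p(1) yP] G_row[OF assms(2)] p by simp
qed

lemma point_at_rowc_colc: "p \<in> P \<Longrightarrow> point_at (rowc p) (colc p) = p"
  using coords_determine_point point_at_coords coords_G by metis

lemma point_at_inj:
  "x \<in> G \<Longrightarrow> y \<in> G \<Longrightarrow> x' \<in> G \<Longrightarrow> y' \<in> G \<Longrightarrow> point_at x y = point_at x' y' \<longleftrightarrow> x = x' \<and> y = y'"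
  using point_at_coords by metis

lemma add_closed: "x \<in> G \<Longrightarrow> y \<in> G \<Longrightarrow> x \<oplus> y \<in> G"
  unfolding add_def using coords_G point_at_coords by metis

lemma symc_sum: "p \<in> P \<Longrightarrow> symc p = rowc p \<oplus> colc p"
  unfolding add_def using point_at_rowc_colc by simp

lemma add_zero: assumes "x \<in> G" shows "x \<oplus> z0 = x"
proof -
  have xP: "x \<in> P" using assms G_sub by auto
  have s: "sc x z0 \<in> P" "fs (sc x z0) = fs x" "fc (sc x z0) = fc z0" using sc_prop[OF xP z0_in] by auto
  have "point_at x z0 = sc x z0" unfolding point_at_def using rc_eq[OF s(1) z0_in s(1)] s by simp
  moreover have "symc (sc x z0) = x" unfolding symc_def using rs_eq[OF z0_in s(1) xP] G_row[OF assms] s by simp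
  ultimately show ?thesis unfolding add_def by simp
qed

lemma zero_add: "y \<in> G \<Longrightarrow> z0 \<oplus> y = y"
  using symc_sum coords_of_base G_sub by metis

lemma add_exchange:
  assumes G: "x1 \<in> G" "y1 \<in> G" "x2 \<in> G" "y2 \<in> G" and h: "x1 \<oplus> y2 = x2 \<oplus> y1"
  shows "x1 \<oplus> y1 = x2 \<oplus> y2"
proof -
  note p11 = point_at_coords[OF G(1,2)] and p12 = point_at_coords[OF G(1,4)]
    and p21 = point_at_coords[OF G(3,2)] and p22 = point_at_coords[OF G(3,4)]
  have "fr (point_at x1 y1) = fr (point_at x1 y2)" using rowc_eq_iff p11 p12 by metis
  moreover have "fc (point_at x1 y1) = fc (point_at x2 y1)" using colc_eq_iff p11 p21 by metis
  moreover have "fs (point_at x1 y2) = fs (point_at x2 y1)" using symc_eq_iff p12 p21 h unfolding add_def by metis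
  moreover have "fr (point_at x2 y2) = fr (point_at x2 y1)" using rowc_eq_iff p22 p21 by metis
  moreover have "fc (point_at x2 y2) = fc (point_at x1 y2)" using colc_eq_iff p22 p12 by metis
  ultimately have "fs (point_at x2 y2) = fs (point_at x1 y1)" using quadrangle p11 p12 p21 p22 by metis
  then show ?thesis unfolding add_def using symc_eq_iff p11 p22 by metis
qed

lemma add_self: "x \<in> G \<Longrightarrow> x \<oplus> x = z0"
  using add_exchange[of x x z0 z0] zero_add add_zero z0_G by metis

lemma add_comm: "x \<in> G \<Longrightarrow> y \<in> G \<Longrightarrow> x \<oplus> y = y \<oplus> x"
  using add_exchange[of x y y x] add_self by metis

lemma add_cancel: "x \<in> G \<Longrightarrow> y \<in> G \<Longrightarrow> (x \<oplus> y) \<oplus> y = x"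
  using add_exchange[of x z0 "x \<oplus> y" y] add_zero add_closed z0_G by metis

lemma add_assoc: assumes "x \<in> G" "y \<in> G" "z \<in> G" shows "(x \<oplus> y) \<oplus> z = x \<oplus> (y \<oplus> z)"
proof -
  define w where "w = (x \<oplus> y) \<oplus> z"
  have wG: "w \<in> G" unfolding w_def using add_closed assms by metis
  have "w \<oplus> z = x \<oplus> y" unfolding w_def using add_cancel add_closed assms by metis
  then have "w \<oplus> y = z \<oplus> x" using add_exchange[OF wG assms(2,1,3)] add_comm assms by metis
  then have "w \<oplus> x = y \<oplus> z" using add_exchange[OF wG assms(1,3,2)] add_comm assms by metis
  then have "w = (y \<oplus> z) \<oplus> x" using add_cancel wG assms by metis
  then show ?thesis unfolding w_def using add_comm add_closed assms by metis
qed

sublocale boolean_group G add z0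
  by unfold_locales (use add_closed z0_G add_zero add_self add_comm add_assoc in auto)

lemma nadj_point_at:
  assumes "x \<in> G" "y \<in> G" "x' \<in> G" "y' \<in> G"
  shows "nadj (point_at x y) (point_at x' y') \<longleftrightarrow>
         (x, y) \<noteq> (x', y') \<and> (x = x' \<or> y = y' \<or> x \<oplus> y = x' \<oplus> y')"
proof -
  note p = point_at_coords[OF assms(1,2)] and p' = point_at_coords[OF assms(3,4)]
  have "fr (point_at x y) = fr (point_at x' y') \<longleftrightarrow> x = x'" using rowc_eq_iff p p' by metis
  moreover have "fc (point_at x y) = fc (point_at x' y') \<longleftrightarrow> y = y'" using colc_eq_iff p p' by metis
  moreover have "fs (point_at x y) = fs (point_at x' y') \<longleftrightarrow> x \<oplus> y = x' \<oplus> y'"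
    using symc_eq_iff p p' unfolding add_def by metis
  ultimately show ?thesis unfolding net_adj_def using point_at_inj assms by auto
qed

end

section \<open>3-e.c. forces the group Z_2^3\<close>

lemma card_z2cube: "card (UNIV :: z2cube set) = 8"
  by (simp add: card_UNIV_bool UNIV_Times_UNIV[symmetric] card_cartesian_product del: UNIV_Times_UNIV)

context boolean_net
begin

text \<open>G is not generated by two elements: otherwise no point is non-adjacent to the three points
  (0,0), (0,e1), (0,e2) of the base column.\<close>
lemma base_row_not_span2:
  assumes ec: "n_ec P nadj 3" and e: "e1 \<in> G" "e2 \<in> G" "e1 \<noteq> z0" "e2 \<notin> {z0, e1}"
  shows "\<not> G \<subseteq> span2 e1 e2"
proof
  assume sub: "G \<subseteq> span2 e1 e2"
  have B: "point_at z0 y \<in> P" if "y \<in> G" for y using point_at_coords z0_G that by blast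
  have "point_at z0 z0 \<noteq> point_at z0 e1" "point_at z0 z0 \<noteq> point_at z0 e2"
    "point_at z0 e1 \<noteq> point_at z0 e2"
    using point_at_inj z0_G e by auto
  then obtain z where z: "z \<in> P" "z \<notin> point_at z0 ` {z0, e1, e2}" "\<forall>y\<in>{z0, e1, e2}. \<not> nadj z (point_at z0 y)"
    using n_ec_3D[OF ec B[OF z0_G] B[OF e(1)] B[OF e(2)], of False False False] by auto
  define k g where "k = rowc z" and "g = colc z"
  have kg: "k \<in> G" "g \<in> G" "z = point_at k g"
    unfolding k_def g_def using coords_G point_at_rowc_colc z(1) by auto
  have "k \<noteq> z0 \<and> g \<noteq> y \<and> k \<oplus> g \<noteq> y" if "y \<in> {z0, e1, e2}" for y
    using z that kg nadj_point_at[OF kg(1,2) z0_G, of y] e z0_G by (auto simp: zero_add)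
  then have c: "k \<noteq> z0" "g \<notin> {z0, e1, e2}" "k \<oplus> g \<notin> {z0, e1, e2}" by auto
  have "g = e1 \<oplus> e2" "k \<in> {e1, e2, e1 \<oplus> e2}" using sub kg c unfolding span2_def by auto
  moreover have "e1 \<oplus> (e1 \<oplus> e2) = e2" "e2 \<oplus> (e1 \<oplus> e2) = e1" "(e1 \<oplus> e2) \<oplus> (e1 \<oplus> e2) = z0"
    using e add_closed add_cancel_left add_cancel_right add_self add_comm by metis+
  ultimately show False using c by auto
qed

text \<open>G is generated by any three independent elements: for e4 outside their span no point is
  adjacent to all of (0,0), (e1,e2), (e3,e4), since each way of being adjacent to all three
  identifies two of the seven distinct elements 0, e1, e2, e3, e4, e1+e2, e3+e4.\<close>
lemma base_row_in_span3:
  assumes ec: "n_ec P nadj 3" and e: "e1 \<in> G" "e2 \<in> G" "e3 \<in> G" and ind: "independent3 e1 e2 e3"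
  shows "G \<subseteq> range (comb e1 e2 e3)"
proof
  fix e4 assume e4: "e4 \<in> G"
  show "e4 \<in> range (comb e1 e2 e3)"
  proof (rule ccontr)
    assume "e4 \<notin> range (comb e1 e2 e3)"
    then have dist: "distinct [z0, e1, e2, e3, e1 \<oplus> e2, e4, e3 \<oplus> e4]"
      using outside_span3_distinct e e4 ind by blast
    have A: "point_at z0 z0 \<in> P" "point_at e1 e2 \<in> P" "point_at e3 e4 \<in> P"
      using point_at_coords z0_G e e4 by auto
    have "point_at z0 z0 \<noteq> point_at e1 e2" "point_at z0 z0 \<noteq> point_at e3 e4"
      "point_at e1 e2 \<noteq> point_at e3 e4"
      using point_at_inj z0_G e e4 dist by auto
    then obtain z where z: "z \<in> P"
      "nadj z (point_at z0 z0)" "nadj z (point_at e1 e2)" "nadj z (point_at e3 e4)"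
      using n_ec_3D[OF ec A, of True True True] by auto
    define k g where "k = rowc z" and "g = colc z"
    have kg: "k \<in> G" "g \<in> G" "z = point_at k g"
      unfolding k_def g_def using coords_G point_at_rowc_colc z(1) by auto
    show False
    proof (rule no_common_neighbour[OF e(1,2,3) e4 kg(1,2) dist])
      show "(k, g) \<noteq> (z0, z0)" "k = z0 \<or> g = z0 \<or> k \<oplus> g = z0"
        using z(2) nadj_point_at[OF kg(1,2) z0_G z0_G] kg zero_add z0_G by simp_all
      show "k = e1 \<or> g = e2 \<or> k \<oplus> g = e1 \<oplus> e2"
        using z(3) nadj_point_at[OF kg(1,2) e(1,2)] kg by simp
      show "k = e3 \<or> g = e4 \<or> k \<oplus> g = e3 \<oplus> e4"
        using z(4) nadj_point_at[OF kg(1,2) e(3) e4] kg by simp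
    qed
  qed
qed

lemma graph_iso_by_basis:
  assumes e: "e1 \<in> G" "e2 \<in> G" "e3 \<in> G"
    and inj_c: "inj (comb e1 e2 e3)" and range_c: "range (comb e1 e2 e3) = G"
  shows "graph_iso P nadj (UNIV :: (z2cube \<times> z2cube) set) ls_adj"
proof -
  let ?c = "comb e1 e2 e3"
  define g where "g uv = point_at (?c (fst uv)) (?c (snd uv))" for uv
  have c_G: "?c x \<in> G" for x using range_c by blast
  have "bij_betw g UNIV P"
  proof (rule bij_betw_imageI)
    show "inj g"
    proof (rule injI)
      fix u v assume "g u = g v"
      then have "?c (fst u) = ?c (fst v) \<and> ?c (snd u) = ?c (snd v)"
        unfolding g_def using point_at_inj c_G by blast
      then show "u = v" using inj_eq[OF inj_c] by (simp add: prod_eq_iff)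
    qed
    have "p \<in> range g" if "p \<in> P" for p
    proof -
      have "rowc p \<in> range ?c" "colc p \<in> range ?c" using coords_G that range_c by auto
      then obtain x y where "?c x = rowc p" "?c y = colc p" by (metis imageE)
      then have "g (x, y) = p" unfolding g_def using point_at_rowc_colc that by simp
      then show ?thesis by (metis rangeI)
    qed
    then show "range g = P" unfolding g_def using point_at_coords c_G by auto
  qed
  moreover have "nadj (g u) (g v) = ls_adj u v" for u v
  proof -
    obtain a b a' b' where uv: "u = (a, b)" "v = (a', b')" by (cases u; cases v)
    have "?c a \<oplus> ?c b = ?c a' \<oplus> ?c b' \<longleftrightarrow> z2add a b = z2add a' b'"
      using comb_add[OF e, symmetric] inj_eq[OF inj_c] by simp
    then show ?thesis unfolding g_def uv ls_adj_def
      using nadj_point_at[OF c_G c_G c_G c_G] inj_eq[OF inj_c] by auto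
  qed
  ultimately show ?thesis using graph_iso_by_inverse by blast
qed

theorem net_classification:
  assumes ec: "n_ec P nadj 3" and c3: "card G \<ge> 3"
  shows "card G = 8 \<and> graph_iso P nadj (UNIV :: (z2cube \<times> z2cube) set) ls_adj"
proof -
  have small: "\<not> G \<subseteq> {z0, e}" for e
  proof
    assume "G \<subseteq> {z0, e}"
    then have "card G \<le> card {z0, e}" by (intro card_mono) auto
    also have "\<dots> \<le> 2" by (simp add: card_insert_if)
    finally show False using c3 by simp
  qed
  obtain e1 where e1: "e1 \<in> G" "e1 \<noteq> z0" using small[of z0] by blast
  obtain e2 where e2: "e2 \<in> G" "e2 \<notin> {z0, e1}" using small[of e1] by blast
  obtain e3 where e3: "e3 \<in> G" "e3 \<notin> span2 e1 e2"
    using base_row_not_span2[OF ec e1(1) e2(1) e1(2) e2(2)] by blast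
  have e: "e1 \<in> G" "e2 \<in> G" "e3 \<in> G" and ind: "independent3 e1 e2 e3"
    using e1 e2 e3 unfolding independent3_def by auto
  have inj_c: "inj (comb e1 e2 e3)" using comb_inj[OF e ind] .
  have range_c: "range (comb e1 e2 e3) = G"
    using comb_closed[OF e] base_row_in_span3[OF ec e ind] by blast
  have "card G = 8" using card_image[OF inj_c] range_c card_z2cube by simp
  then show ?thesis using graph_iso_by_basis[OF e inj_c range_c] by blast
qed

end

section \<open>Partial geometries pg(s,2,2) are 3-nets\<close>

locale pg22 =
  fixes P :: "'p set" and L :: "'p set set" and s :: nat
  assumes pg: "partial_geometry P L s 2 2"
begin

lemma finite_L: "finite L" and P_nonempty: "P \<noteq> {}"
  and line_sub: "M \<in> L \<Longrightarrow> M \<subseteq> P"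
  and line_card: "M \<in> L \<Longrightarrow> card M = s + 1"
  and lines_through_card: "p \<in> P \<Longrightarrow> card {M\<in>L. p \<in> M} = 3"
  and meeting_card: "p \<in> P \<Longrightarrow> K \<in> L \<Longrightarrow> p \<notin> K \<Longrightarrow> card {M\<in>L. p \<in> M \<and> M \<inter> K \<noteq> {}} = 2"
  and joining_card: "p \<in> P \<Longrightarrow> q \<in> P \<Longrightarrow> p \<noteq> q \<Longrightarrow> card {M\<in>L. p \<in> M \<and> q \<in> M} \<le> 1"
  using pg unfolding partial_geometry_def by auto

lemma line_unique:
  assumes "p \<in> P" "q \<in> P" "p \<noteq> q" "M \<in> L" "N \<in> L" "p \<in> M" "q \<in> M" "p \<in> N" "q \<in> N"
  shows "M = N"
  using joining_card[OF assms(1-3)] finite_L assms(4-9) by (auto simp: card_le_Suc0_iff_eq)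

text \<open>Since alpha = t = 2, of the three lines through a point p off K exactly one misses K:
  the parallel to K through p.\<close>
lemma parallel_ex1:
  assumes "p \<in> P" "K \<in> L" "p \<notin> K"
  shows "\<exists>!M. M \<in> L \<and> p \<in> M \<and> M \<inter> K = {}"
proof -
  let ?meet = "{M\<in>L. p \<in> M \<and> M \<inter> K \<noteq> {}}"
  have "card ({M\<in>L. p \<in> M} - ?meet) = 1"
    using card_Diff_subset[of ?meet "{M\<in>L. p \<in> M}"] finite_L
      lines_through_card[OF assms(1)] meeting_card[OF assms] by auto
  moreover have "{M\<in>L. p \<in> M} - ?meet = {M\<in>L. p \<in> M \<and> M \<inter> K = {}}" by blast
  ultimately obtain X where X: "{M\<in>L. p \<in> M \<and> M \<inter> K = {}} = {X}"
    by (auto simp: card_1_singleton_iff)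
  show ?thesis
  proof (rule ex1I[of _ X])
    show "X \<in> L \<and> p \<in> X \<and> X \<inter> K = {}" using X by blast
    show "M = X" if "M \<in> L \<and> p \<in> M \<and> M \<inter> K = {}" for M using X that by blast
  qed
qed

definition par :: "'p \<Rightarrow> 'p set \<Rightarrow> 'p set" where
  "par p K = (THE M. M \<in> L \<and> p \<in> M \<and> (M = K \<or> M \<inter> K = {}))"

lemma par_eq:
  assumes "p \<in> P" "K \<in> L" "M \<in> L" "p \<in> M" "M = K \<or> M \<inter> K = {}"
  shows "par p K = M"
  unfolding par_def
proof (rule the_equality)
  fix N assume N: "N \<in> L \<and> p \<in> N \<and> (N = K \<or> N \<inter> K = {})"
  show "N = M"
  proof (cases "p \<in> K")
    case True then show ?thesis using assms N by auto
  next
    case False then show ?thesis using parallel_ex1[OF assms(1,2) False] assms N by auto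
  qed
qed (use assms in blast)

lemma par_prop:
  assumes "p \<in> P" "K \<in> L"
  shows "par p K \<in> L" "p \<in> par p K" "par p K = K \<or> par p K \<inter> K = {}"
proof -
  obtain M where "M \<in> L" "p \<in> M" "M = K \<or> M \<inter> K = {}"
    using parallel_ex1[OF assms] assms by (cases "p \<in> K") blast+
  then show "par p K \<in> L" "p \<in> par p K" "par p K = K \<or> par p K \<inter> K = {}"
    using par_eq[OF assms] by auto
qed

lemma par_same:
  assumes "p \<in> P" "K \<in> L" "q \<in> par p K"
  shows "par q K = par p K"
  using par_eq[of q K "par p K"] par_prop[OF assms(1,2)] line_sub assms by blast

lemma par_mem_iff:
  assumes "p \<in> P" "q \<in> P" "K \<in> L"
  shows "q \<in> par p K \<longleftrightarrow> par p K = par q K"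
  using par_same[OF assms(1,3)] par_prop(2)[OF assms(2,3)] by metis

lemma par_neq:
  assumes "K \<in> L" "K' \<in> L" "K \<noteq> K'" "x \<in> K" "x \<in> K'" "p \<in> P"
  shows "par p K \<noteq> par p K'"
proof
  assume eq: "par p K = par p K'"
  let ?M = "par p K"
  have M: "?M \<in> L" "?M = K \<or> ?M \<inter> K = {}" "?M = K' \<or> ?M \<inter> K' = {}"
    using par_prop[OF assms(6,1)] par_prop[OF assms(6,2)] eq by auto
  show False
  proof (cases "?M = K \<or> ?M = K'")
    case True
    then show False using M assms(3-5) by blast
  next
    case False
    then have "K \<inter> ?M = {}" "K' \<inter> ?M = {}" using M by auto
    then have "par x ?M = K" "par x ?M = K'"
      using par_eq[OF _ M(1)] assms line_sub by blast+
    then show False using assms(3) by simp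
  qed
qed

lemma par_meet:
  assumes "K \<in> L" "K' \<in> L" "K \<noteq> K'" "x \<in> K" "x \<in> K'" "p \<in> P" "q \<in> P"
  shows "\<exists>y\<in>P. par y K = par p K \<and> par y K' = par q K'"
proof -
  let ?M = "par p K" and ?N = "par q K'"
  have M: "?M \<in> L" "p \<in> ?M" and N: "?N \<in> L" using par_prop assms by auto
  have "?M \<inter> ?N \<noteq> {}"
  proof
    assume dis: "?M \<inter> ?N = {}"
    then have pN: "p \<notin> ?N" using M by blast
    have "par p K' \<inter> ?N = {}"
      using par_same[OF assms(6,2)] par_same[OF assms(7,2)] pN par_prop(2)[OF assms(6,2)] by blast
    then have "?M = par p K'"
      using parallel_ex1[OF assms(6) N pN] M dis par_prop[OF assms(6,2)] by blast
    then show False using par_neq[OF assms(1-6)] by simp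
  qed
  then obtain y where y: "y \<in> ?M" "y \<in> ?N" by blast
  then show ?thesis
    using par_same[OF assms(6,1) y(1)] par_same[OF assms(7,2) y(2)] M line_sub by blast
qed

lemma par_determines:
  assumes "K \<in> L" "K' \<in> L" "K \<noteq> K'" "x \<in> K" "x \<in> K'" "p \<in> P" "q \<in> P"
    "par p K = par q K" "par p K' = par q K'"
  shows "p = q"
proof (rule ccontr)
  assume "p \<noteq> q"
  moreover have "q \<in> par p K" "q \<in> par p K'" using par_prop(2)[OF assms(7,1)] par_prop(2)[OF assms(7,2)] assms(8,9) by auto
  ultimately have "par p K = par p K'"
    using line_unique[OF assms(6,7)] par_prop[OF assms(6,1)] par_prop[OF assms(6,2)] by blast
  then show False using par_neq[OF assms(1-6)] by simp
qed

context
  fixes o0 R C S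
  assumes o0: "o0 \<in> P" and lines_o0: "{M\<in>L. o0 \<in> M} = {R, C, S}"
    and dist: "R \<noteq> C" "C \<noteq> S" "R \<noteq> S"
begin

lemma base_lines: "R \<in> L" "o0 \<in> R" "C \<in> L" "o0 \<in> C" "S \<in> L" "o0 \<in> S"
  using lines_o0 by blast+

lemma base_point_net: "three_net P (\<lambda>p. par p R) (\<lambda>p. par p C) (\<lambda>p. par p S) o0"
proof
  fix p q assume pq: "p \<in> P" "q \<in> P"
  show "par p R = par q R \<Longrightarrow> par p C = par q C \<Longrightarrow> p = q"
    using par_determines[OF base_lines(1,3) dist(1) base_lines(2,4) pq] .
  show "par p R = par q R \<Longrightarrow> par p S = par q S \<Longrightarrow> p = q"
    using par_determines[OF base_lines(1,5) dist(3) base_lines(2,6) pq] .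
  show "par p C = par q C \<Longrightarrow> par p S = par q S \<Longrightarrow> p = q"
    using par_determines[OF base_lines(3,5) dist(2) base_lines(4,6) pq] .
  show "\<exists>x\<in>P. par x R = par p R \<and> par x C = par q C"
    using par_meet[OF base_lines(1,3) dist(1) base_lines(2,4) pq] .
  show "\<exists>x\<in>P. par x R = par p R \<and> par x S = par q S"
    using par_meet[OF base_lines(1,5) dist(3) base_lines(2,6) pq] .
  show "\<exists>x\<in>P. par x S = par p S \<and> par x C = par q C"
    using par_meet[OF base_lines(5,3) dist(2)[symmetric] base_lines(6,4) pq] .
qed (rule o0)

lemma lines_through_point: "p \<in> P \<Longrightarrow> {M\<in>L. p \<in> M} = {par p R, par p C, par p S}"
proof -
  assume p: "p \<in> P"
  have sub: "{par p R, par p C, par p S} \<subseteq> {M\<in>L. p \<in> M}"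
    using par_prop(1,2) base_lines p by simp
  have "card {par p R, par p C, par p S} = 3"
    using par_neq[OF base_lines(1,3) dist(1) base_lines(2,4) p]
      par_neq[OF base_lines(3,5) dist(2) base_lines(4,6) p]
      par_neq[OF base_lines(1,5) dist(3) base_lines(2,6) p] by simp
  then show ?thesis
    using card_subset_eq[OF _ sub] finite_L lines_through_card[OF p] by simp
qed

lemma point_adj_net_adj:
  assumes "p \<in> P" "q \<in> P"
  shows "point_adj L p q = net_adj (\<lambda>p. par p R) (\<lambda>p. par p C) (\<lambda>p. par p S) p q"
proof -
  have "(\<exists>M\<in>L. p \<in> M \<and> q \<in> M) \<longleftrightarrow> (\<exists>M\<in>{M\<in>L. p \<in> M}. q \<in> M)" by blast
  also have "\<dots> \<longleftrightarrow> q \<in> par p R \<or> q \<in> par p C \<or> q \<in> par p S"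
    unfolding lines_through_point[OF assms(1)] by simp
  also have "\<dots> \<longleftrightarrow> par p R = par q R \<or> par p C = par q C \<or> par p S = par q S"
    using par_mem_iff[OF assms] base_lines by simp
  finally show ?thesis unfolding point_adj_def net_adj_def by simp
qed

end

theorem pg22_classification:
  assumes ec: "n_ec P (point_adj L) 3" and s2: "s \<ge> 2"
  shows "s = 7 \<and> graph_iso P (point_adj L) (UNIV :: (z2cube \<times> z2cube) set) ls_adj"
proof -
  obtain o0 where o0: "o0 \<in> P" using P_nonempty by auto
  obtain R C S where lines: "{M\<in>L. o0 \<in> M} = {R, C, S}" and dist: "R \<noteq> C" "C \<noteq> S" "R \<noteq> S"
    using lines_through_card[OF o0] by (auto simp: card_3_iff)
  interpret N: three_net P "\<lambda>p. par p R" "\<lambda>p. par p C" "\<lambda>p. par p S" o0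
    using base_point_net[OF o0 lines dist] .
  have adj: "p \<in> P \<Longrightarrow> q \<in> P \<Longrightarrow> point_adj L p q = N.nadj p q" for p q
    using point_adj_net_adj[OF o0 lines dist] by blast
  have ec': "n_ec P N.nadj 3" using ec n_ec_cong[of P "point_adj L" N.nadj 3] adj by simp
  interpret B: boolean_net P "\<lambda>p. par p R" "\<lambda>p. par p C" "\<lambda>p. par p S" o0
    using N.quadrangle_from_ec[OF ec'] by unfold_locales
  note base = base_lines[OF o0 lines dist]
  have "par x R = R \<longleftrightarrow> x \<in> R" if "x \<in> P" for x
    using par_eq[OF that base(1) base(1)] par_prop(2)[OF that base(1)] by auto
  then have "B.G = R"
    unfolding B.G_def using par_eq[OF o0 base(1) base(1,2)] line_sub[OF base(1)] by auto
  then have "card B.G = s + 1" using line_card base(1) by simp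
  then show ?thesis
    using B.net_classification[OF ec'] s2 graph_iso_cong[of P "point_adj L" N.nadj] adj by auto
qed

end

section \<open>Latin square geometries\<close>

text \<open>The three kinds of lines of a Latin square: rows, columns and symbol classes.  A point
  (a, b) lies on the line of kind t with key k iff latin_key op t (a, b) = k.\<close>
datatype kind = Row | Col | Sym

fun latin_key :: "('a \<Rightarrow> 'a \<Rightarrow> 'a) \<Rightarrow> kind \<Rightarrow> 'a \<times> 'a \<Rightarrow> 'a" where
  "latin_key op Row p = fst p"
| "latin_key op Col p = snd p"
| "latin_key op Sym p = op (fst p) (snd p)"

lemma kind_UNIV: "(UNIV :: kind set) = {Row, Col, Sym}"
  using kind.exhaust by auto

lemma ex_kind: "(\<exists>t. P t) \<longleftrightarrow> P Row \<or> P Col \<or> P Sym"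
  by (metis kind.exhaust)

definition latin_line :: "('a \<Rightarrow> 'a \<Rightarrow> 'a) \<Rightarrow> kind \<Rightarrow> 'a \<Rightarrow> ('a \<times> 'a) set" where
  "latin_line op t k = {p. latin_key op t p = k}"

definition latin_lines :: "('a \<Rightarrow> 'a \<Rightarrow> 'a) \<Rightarrow> ('a \<times> 'a) set set" where
  "latin_lines op = {latin_line op t k | t k. True}"

locale latin_square =
  fixes op :: "'a::finite \<Rightarrow> 'a \<Rightarrow> 'a"
  assumes right_solve: "\<And>a c. \<exists>!b. op a b = c"
    and left_solve: "\<And>b c. \<exists>!a. op a b = c"
    and order_ge_2: "card (UNIV :: 'a set) \<ge> 2"
begin

abbreviation key :: "kind \<Rightarrow> 'a \<times> 'a \<Rightarrow> 'a" where "key \<equiv> latin_key op"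
abbreviation line :: "kind \<Rightarrow> 'a \<Rightarrow> ('a \<times> 'a) set" where "line \<equiv> latin_line op"

lemma meet_ex1:
  assumes "t \<noteq> t'" shows "\<exists>!p. key t p = k \<and> key t' p = k'"
proof -
  have rc: "\<exists>!p. fst p = a \<and> snd p = b" for a b by auto
  have rs: "\<exists>!p. fst p = a \<and> op (fst p) (snd p) = c" for a c
  proof -
    obtain b where b: "op a b = c" and uniq: "\<And>b'. op a b' = c \<Longrightarrow> b' = b"
      using right_solve[of a c] by blast
    show ?thesis
    proof (rule ex1I[of _ "(a, b)"])
      fix p assume "fst p = a \<and> op (fst p) (snd p) = c"
      then show "p = (a, b)" using uniq by (cases p) simp
    qed (simp add: b)
  qed
  have cs: "\<exists>!p. snd p = b \<and> op (fst p) (snd p) = c" for b c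
  proof -
    obtain a where a: "op a b = c" and uniq: "\<And>a'. op a' b = c \<Longrightarrow> a' = a"
      using left_solve[of b c] by blast
    show ?thesis
    proof (rule ex1I[of _ "(a, b)"])
      fix p assume "snd p = b \<and> op (fst p) (snd p) = c"
      then show "p = (a, b)" using uniq by (cases p) simp
    qed (simp add: a)
  qed
  show ?thesis using assms rc rs cs by (cases t; cases t') (simp_all add: conj_commute)
qed

lemma key_determines: "t \<noteq> t' \<Longrightarrow> key t p = key t q \<Longrightarrow> key t' p = key t' q \<Longrightarrow> p = q"
  using meet_ex1 by blast

lemma card_line: "card (line t k) = card (UNIV :: 'a set)"
proof -
  obtain t' where t': "t' \<noteq> t" using kind.distinct(1,2) by metis
  have "bij_betw (key t') (line t k) UNIV"
  proof (rule bij_betw_imageI)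
    show "inj_on (key t') (line t k)"
      using key_determines[OF t'] unfolding latin_line_def by (intro inj_onI) simp
    have "x \<in> key t' ` line t k" for x
    proof -
      obtain p where "key t' p = x" "key t p = k" using meet_ex1[OF t', of x k] by blast
      then show ?thesis unfolding latin_line_def by blast
    qed
    then show "key t' ` line t k = UNIV" by blast
  qed
  then show ?thesis by (simp add: bij_betw_same_card)
qed

text \<open>Lines are determined by kind and key (lines of different kinds share one point only).\<close>
lemma line_eq_iff: "line t k = line t' k' \<longleftrightarrow> t = t' \<and> k = k'"
proof
  assume eq: "line t k = line t' k'"
  have "t = t'"
  proof (rule ccontr)
    assume "t \<noteq> t'"
    then have "card (line t k \<inter> line t' k') \<le> 1"
      using key_determines unfolding latin_line_def by (auto simp: card_le_Suc0_iff_eq)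
    then show False using eq card_line order_ge_2 by simp
  qed
  moreover obtain p where "key t p = k" using meet_ex1[of t] by (metis kind.distinct(1,3))
  ultimately show "t = t' \<and> k = k'" using eq unfolding latin_line_def by auto
qed simp

lemma line_in_lines: "line t k \<in> latin_lines op"
  unfolding latin_lines_def by blast

lemma mem_line: "p \<in> line t k \<longleftrightarrow> key t p = k"
  unfolding latin_line_def by simp

lemma lines_cases: "M \<in> latin_lines op \<Longrightarrow> (\<And>t k. M = line t k \<Longrightarrow> thesis) \<Longrightarrow> thesis"
  unfolding latin_lines_def by blast

lemma lines_through: "{M \<in> latin_lines op. p \<in> M} = range (\<lambda>u. line u (key u p))"
proof
  show "{M \<in> latin_lines op. p \<in> M} \<subseteq> range (\<lambda>u. line u (key u p))"
  proof
    fix M assume "M \<in> {M \<in> latin_lines op. p \<in> M}"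
    then obtain t k where "M = line t k" "p \<in> M" by (auto elim: lines_cases)
    then show "M \<in> range (\<lambda>u. line u (key u p))"
      using mem_line rangeI[of "\<lambda>u. line u (key u p)" t] by simp
  qed
qed (auto simp: line_in_lines mem_line)

lemma inj_lines_through: "inj_on (\<lambda>u. line u (key u p)) A"
  by (intro inj_onI) (simp add: line_eq_iff)

lemma line_inter_unique:
  assumes "line t k \<noteq> line t' k'" "p \<in> line t k \<inter> line t' k'" "q \<in> line t k \<inter> line t' k'"
  shows "p = q"
proof -
  have keys: "key t p = key t q" "key t' p = key t' q" using assms(2,3) by (simp_all add: mem_line)
  have "t \<noteq> t'"
  proof
    assume "t = t'"
    then have "k = k'" using assms(2) by (auto simp: mem_line)
    then show False using assms(1) \<open>t = t'\<close> by simp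
  qed
  then show ?thesis using key_determines keys by blast
qed

lemma line_inter_empty_iff: "line t k \<inter> line t' k' = {} \<longleftrightarrow> t = t' \<and> k \<noteq> k'"
proof (cases "t = t'")
  case True
  obtain t'' where "t'' \<noteq> t" using kind.distinct(1,2) by metis
  then obtain p where "key t p = k" using meet_ex1 by blast
  then show ?thesis using True by (auto simp: mem_line)
next
  case False
  then obtain p where "key t p = k" "key t' p = k'" using meet_ex1 by blast
  then show ?thesis using False by (auto simp: mem_line)
qed

theorem partial_geometry:
  "partial_geometry (UNIV :: ('a \<times> 'a) set) (latin_lines op) (card (UNIV :: 'a set) - 1) 2 2"
  unfolding partial_geometry_def
proof (intro conjI ballI impI)
  show "finite (latin_lines op)"
    by (rule finite_subset[of _ "Pow UNIV"]) auto
  fix p :: "'a \<times> 'a"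
  show "card {M \<in> latin_lines op. p \<in> M} = 2 + 1"
    by (simp only: lines_through card_image[OF inj_lines_through]) (simp add: kind_UNIV)
  fix q assume pq: "p \<noteq> q"
  have "M = N" if MN: "M \<in> latin_lines op" "N \<in> latin_lines op" and pq_in: "p \<in> M \<inter> N" "q \<in> M \<inter> N"
    for M N
  proof -
    obtain t k t' k' where "M = line t k" "N = line t' k'" using MN by (metis lines_cases)
    then show ?thesis using line_inter_unique pq_in pq by blast
  qed
  then show "card {M \<in> latin_lines op. p \<in> M \<and> q \<in> M} \<le> 1"
    by (auto simp: card_le_Suc0_iff_eq)
next
  fix M assume "M \<in> latin_lines op"
  then show "card M = card (UNIV :: 'a set) - 1 + 1"
    using card_line order_ge_2 by (auto elim: lines_cases)
next
  fix p :: "'a \<times> 'a" and K assume K: "K \<in> latin_lines op" "p \<notin> K"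
  then obtain t k where t: "K = line t k" "key t p \<noteq> k" by (auto simp: mem_line elim: lines_cases)
  let ?f = "\<lambda>u. line u (key u p)"
  have "{M \<in> latin_lines op. p \<in> M \<and> M \<inter> K \<noteq> {}} = {M \<in> {M \<in> latin_lines op. p \<in> M}. M \<inter> K \<noteq> {}}"
    by blast
  also have "\<dots> = ?f ` {u. ?f u \<inter> K \<noteq> {}}" unfolding lines_through by blast
  also have "{u. ?f u \<inter> K \<noteq> {}} = UNIV - {t}" using t line_inter_empty_iff by auto
  finally have "{M \<in> latin_lines op. p \<in> M \<and> M \<inter> K \<noteq> {}} = ?f ` (UNIV - {t})" .
  moreover have "card (UNIV - {t}) = 2" by (cases t) (simp_all add: kind_UNIV)
  ultimately show "card {M \<in> latin_lines op. p \<in> M \<and> M \<inter> K \<noteq> {}} = 2"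
    using card_image[OF inj_lines_through] by simp
qed auto

lemma point_adj_latin: "point_adj (latin_lines op) p q \<longleftrightarrow> p \<noteq> q \<and> (\<exists>t. key t p = key t q)"
proof -
  have "(\<exists>M\<in>latin_lines op. p \<in> M \<and> q \<in> M) \<longleftrightarrow> (\<exists>t. key t p = key t q)"
    using line_in_lines mem_line by (metis lines_cases)
  then show ?thesis unfolding point_adj_def by simp
qed

end

definition z2zero :: z2cube where "z2zero = (False, False, False)"

interpretation Z2: boolean_group "UNIV :: z2cube set" z2add z2zero
  by unfold_locales (auto simp: z2add_def z2zero_def split: prod.splits)

interpretation Z2L: latin_square z2add
proof
  fix a b c :: z2cube
  show "\<exists>!b. z2add a b = c"
    by (rule ex1I[of _ "z2add a c"]) (auto simp: Z2.add_cancel_left)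
  show "\<exists>!a. z2add a b = c"
    by (rule ex1I[of _ "z2add c b"]) (auto simp: Z2.add_cancel_right)
  show "card (UNIV :: z2cube set) \<ge> 2" using card_z2cube by simp
qed

lemma ls_adj_point_adj: "ls_adj u v \<longleftrightarrow> point_adj (latin_lines z2add) u v"
proof -
  have "(\<exists>t. latin_key z2add t u = latin_key z2add t v) \<longleftrightarrow>
        fst u = fst v \<or> snd u = snd v \<or> z2add (fst u) (snd u) = z2add (fst v) (snd v)"
    unfolding ex_kind by simp
  then show ?thesis unfolding Z2L.point_adj_latin ls_adj_def by (auto split: prod.splits)
qed

lemma z2_geometry: "partial_geometry (UNIV :: (z2cube \<times> z2cube) set) (latin_lines z2add) 7 2 2"
  using Z2L.partial_geometry card_z2cube by simp

section \<open>The Latin square graph of Z_2^3 is 3-e.c.\<close>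

text \<open>Automorphisms of the graph: translations, the swap of the coordinates, the shear
  exchanging columns and symbols, and the diagonal action of linear bijections.  They act
  transitively on vertices, and the stabiliser of the origin has two orbits on the other
  vertices, represented by r1 = (0, e1) (collinear with the origin) and r2 = (e1, e2).\<close>
abbreviation origin :: "z2cube \<times> z2cube" where "origin \<equiv> (z2zero, z2zero)"

definition e1 :: z2cube where "e1 = (True, False, False)"
definition e2 :: z2cube where "e2 = (False, True, False)"
definition r1 :: "z2cube \<times> z2cube" where "r1 = (z2zero, e1)"
definition r2 :: "z2cube \<times> z2cube" where "r2 = (e1, e2)"

abbreviation ls_aut :: "(z2cube \<times> z2cube \<Rightarrow> z2cube \<times> z2cube) \<Rightarrow> bool" where
  "ls_aut \<equiv> graph_aut UNIV ls_adj"

lemma ls_aut_involution: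
  assumes "\<And>x. h (h x) = x" "\<And>u v. ls_adj (h u) (h v) = ls_adj u v"
  shows "ls_aut h"
  unfolding graph_aut_def using assms by (metis bijI' UNIV_I bij_betw_def)

lemma ls_adj_iff: "ls_adj u v \<longleftrightarrow>
    u \<noteq> v \<and> (fst u = fst v \<or> snd u = snd v \<or> z2add (fst u) (snd u) = z2add (fst v) (snd v))"
  unfolding ls_adj_def by (simp split: prod.splits)

lemma z2add_right_inj: "z2add x t = z2add y t \<longleftrightarrow> x = y"
  using Z2.add_left_inj[of t x y] Z2.add_comm by simp

definition translate :: "z2cube \<times> z2cube \<Rightarrow> z2cube \<times> z2cube \<Rightarrow> z2cube \<times> z2cube" where
  "translate t x = (z2add (fst x) (fst t), z2add (snd x) (snd t))"

lemma translate_translate: "translate t (translate t x) = x"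
  unfolding translate_def by (simp add: Z2.add_cancel_right)

lemma translate_self: "translate t t = origin"
  unfolding translate_def by (simp add: Z2.add_self)

lemma ls_aut_translate: "ls_aut (translate t)"
proof (rule ls_aut_involution[OF translate_translate])
  fix u v :: "z2cube \<times> z2cube"
  have "u \<noteq> v \<longleftrightarrow> translate t u \<noteq> translate t v" using translate_translate by metis
  moreover have "fst (translate t x) = z2add (fst x) (fst t)" "snd (translate t x) = z2add (snd x) (snd t)"
    for x unfolding translate_def by simp_all
  moreover have "z2add (fst (translate t x)) (snd (translate t x)) =
      z2add (z2add (fst x) (snd x)) (z2add (fst t) (snd t))" for x
    unfolding translate_def fst_conv snd_conv by (rule Z2.add_medial) simp_all
  ultimately show "ls_adj (translate t u) (translate t v) = ls_adj u v"
    unfolding ls_adj_iff by (simp only: z2add_right_inj)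
qed

definition swap :: "z2cube \<times> z2cube \<Rightarrow> z2cube \<times> z2cube" where
  "swap x = (snd x, fst x)"

lemma ls_aut_swap: "ls_aut swap"
proof (rule ls_aut_involution)
  show inv: "swap (swap x) = x" for x by (simp add: swap_def)
  fix u v :: "z2cube \<times> z2cube"
  have "u \<noteq> v \<longleftrightarrow> swap u \<noteq> swap v" using inv by metis
  moreover have "z2add (snd x) (fst x) = z2add (fst x) (snd x)" for x
    by (rule Z2.add_comm) simp_all
  ultimately show "ls_adj (swap u) (swap v) = ls_adj u v"
    unfolding ls_adj_iff by (auto simp: swap_def)
qed

definition shear :: "z2cube \<times> z2cube \<Rightarrow> z2cube \<times> z2cube" where
  "shear x = (fst x, z2add (fst x) (snd x))"

lemma ls_aut_shear: "ls_aut shear"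
proof (rule ls_aut_involution)
  show inv: "shear (shear x) = x" for x unfolding shear_def by (simp add: Z2.add_cancel_left)
  fix u v :: "z2cube \<times> z2cube"
  have "u \<noteq> v \<longleftrightarrow> shear u \<noteq> shear v" using inv by metis
  moreover have "fst (shear x) = fst x" "snd (shear x) = z2add (fst x) (snd x)"
    "z2add (fst (shear x)) (snd (shear x)) = snd x" for x
    unfolding shear_def by (simp_all add: Z2.add_cancel_left)
  ultimately show "ls_adj (shear u) (shear v) = ls_adj u v"
    unfolding ls_adj_iff by (simp only:) blast
qed

definition diag :: "(z2cube \<Rightarrow> z2cube) \<Rightarrow> z2cube \<times> z2cube \<Rightarrow> z2cube \<times> z2cube" where
  "diag f x = (f (fst x), f (snd x))"

lemma ls_aut_diag:
  assumes inj: "inj f" and add: "\<And>x y. f (z2add x y) = z2add (f x) (f y)"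
  shows "ls_aut (diag f)"
  unfolding graph_aut_def
proof (intro conjI ballI)
  have inj_diag: "inj (diag f)" by (intro injI prod_eqI) (simp_all add: diag_def inj_eq[OF inj])
  then show "bij_betw (diag f) UNIV UNIV"
    using finite_UNIV_inj_surj[of "diag f"] by (simp add: bij_def)
  fix u v :: "z2cube \<times> z2cube"
  have "u \<noteq> v \<longleftrightarrow> diag f u \<noteq> diag f v" using inj_eq[OF inj_diag] by simp
  moreover have "fst (diag f x) = f (fst x)" "snd (diag f x) = f (snd x)" for x
    unfolding diag_def by simp_all
  ultimately show "ls_adj (diag f u) (diag f v) = ls_adj u v"
    unfolding ls_adj_iff using add[symmetric] inj_eq[OF inj] by simp
qed

lemma ls_aut_comb:
  "Z2.independent3 a b c \<Longrightarrow> ls_aut (diag (Z2.comb a b c))"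
  by (rule ls_aut_diag[OF Z2.comb_inj Z2.comb_add]) simp_all

lemma diag_comb_values:
  "diag (Z2.comb a b c) origin = origin" "diag (Z2.comb a b c) r1 = (z2zero, a)"
  "diag (Z2.comb a b c) r2 = (a, b)"
  unfolding diag_def r1_def r2_def e1_def e2_def z2zero_def using Z2.comb_values[of a b c]
  by (simp_all add: z2zero_def)

lemma z2_card_gt_4: "4 < card (UNIV :: z2cube set)"
  using card_z2cube by simp

lemma exists_independent:
  assumes "a \<noteq> z2zero" shows "\<exists>b c. Z2.independent3 a b c"
proof -
  have "\<not> UNIV \<subseteq> {z2zero, a}"
    using card_mono[of "{z2zero, a}" UNIV] card_length[of "[z2zero, a]"] card_z2cube by auto
  then obtain b where "b \<notin> {z2zero, a}" by blast
  then show ?thesis using Z2.extend_independent[OF z2_card_gt_4 UNIV_I assms UNIV_I] by blast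
qed

lemma stabiliser_orbits:
  assumes v: "v \<noteq> origin"
  shows "\<exists>h. ls_aut h \<and> h origin = origin \<and> (v = h r1 \<or> v = h r2)"
proof -
  obtain a b where ab: "v = (a, b)" by (cases v)
  have fix_origin: "swap origin = origin" "shear origin = origin"
    unfolding swap_def shear_def by (simp_all add: Z2.add_self)
  consider "a = z2zero" | "b = z2zero" "a \<noteq> z2zero" | "a = b" "a \<noteq> z2zero"
    | "a \<noteq> z2zero" "b \<notin> {z2zero, a}" by blast
  then show ?thesis
  proof cases
    case 1
    then obtain c d where "Z2.independent3 b c d" using v ab exists_independent by blast
    then show ?thesis using ls_aut_comb diag_comb_values ab 1 by metis
  next
    case 2
    then obtain c d where ind: "Z2.independent3 a c d" using exists_independent by blast
    let ?h = "swap \<circ> diag (Z2.comb a c d)"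
    have "?h origin = origin" "?h r1 = v"
      using diag_comb_values fix_origin 2 ab by (simp_all add: swap_def)
    then show ?thesis using graph_aut_comp[OF ls_aut_swap ls_aut_comb[OF ind]] by blast
  next
    case 3
    then obtain c d where ind: "Z2.independent3 a c d" using exists_independent by blast
    let ?h = "shear \<circ> swap \<circ> diag (Z2.comb a c d)"
    have "?h origin = origin" "?h r1 = v"
      using diag_comb_values fix_origin 3 ab by (simp_all add: swap_def shear_def Z2.add_zero)
    then show ?thesis
      using graph_aut_comp[OF graph_aut_comp[OF ls_aut_shear ls_aut_swap] ls_aut_comb[OF ind]] by blast
  next
    case 4
    then obtain c where "Z2.independent3 a b c"
      using Z2.extend_independent[OF z2_card_gt_4 UNIV_I _ UNIV_I] by blast
    then show ?thesis using ls_aut_comb diag_comb_values ab by metis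
  qed
qed

lemma realizes_all_enum:
  "realizes_all (UNIV :: 'a::enum set) E u v w \<longleftrightarrow>
     list_all (\<lambda>(p, q, r). list_ex (\<lambda>z. z \<noteq> u \<and> z \<noteq> v \<and> z \<noteq> w \<and> E z u = p \<and> E z v = q \<and> E z w = r)
       Enum.enum) (Enum.enum :: (bool \<times> bool \<times> bool) list)"
  unfolding realizes_all_def list_all_iff list_ex_iff enum_UNIV by auto

lemma representatives_realize_all:
  assumes "r \<in> {r1, r2}" "w \<notin> {origin, r}"
  shows "realizes_all UNIV ls_adj origin r w"
proof -
  have "list_all (\<lambda>w. w = origin \<or> w = r \<or> realizes_all UNIV ls_adj origin r w) Enum.enum"
    using assms(1) unfolding realizes_all_enum r1_def r2_def e1_def e2_def z2zero_def
    by safe code_simp+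
  then show ?thesis using assms(2) unfolding list_all_iff enum_UNIV by blast
qed

text \<open>Second part of the main theorem.  Given three distinct vertices, translate the first to
  the origin and move the second to r1 or r2 by the stabiliser; the third is then covered by
  the computation.\<close>
theorem ls_graph_3ec: "n_ec (UNIV :: (z2cube \<times> z2cube) set) ls_adj 3"
  unfolding n_ec_3_iff
proof (intro ballI impI)
  fix u v w :: "z2cube \<times> z2cube" assume d: "u \<noteq> v \<and> u \<noteq> w \<and> v \<noteq> w"
  let ?t = "translate u"
  have inj_t: "inj ?t" using translate_translate by (metis injI)
  obtain h where h: "ls_aut h" "h origin = origin" and r: "?t v = h r1 \<or> ?t v = h r2"
    using stabiliser_orbits[of "?t v"] d translate_self inj_eq[OF inj_t] by metis
  then obtain r where r: "r \<in> {r1, r2}" "?t v = h r" by blast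
  obtain w' where w': "h w' = ?t w" using h(1) unfolding graph_aut_def by (metis bij_betw_def UNIV_I imageE)
  have "?t w \<noteq> ?t u" "?t w \<noteq> ?t v" using d inj_eq[OF inj_t] by auto
  then have "w' \<notin> {origin, r}" using w' r(2) h(2) translate_self[of u] by auto
  then have "realizes_all UNIV ls_adj (h origin) (h r) (h w')"
    using realizes_all_aut[OF h(1)] representatives_realize_all[OF r(1)] by blast
  then have "realizes_all UNIV ls_adj (?t (?t u)) (?t (?t v)) (?t (?t w))"
    using realizes_all_aut[OF ls_aut_translate] h(2) r(2) w' translate_self by simp
  then show "realizes_all UNIV ls_adj u v w" by (simp add: translate_translate)
qed

theorem mainTheorem9:
  shows "(\<exists>L. partial_geometry (UNIV :: (z2cube \<times> z2cube) set) L 7 2 2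
              \<and> (\<forall>u v. point_adj L u v \<longleftrightarrow> ls_adj u v))
         \<and> n_ec (UNIV :: (z2cube \<times> z2cube) set) ls_adj 3
         \<and> (\<forall>(P :: 'p set) L s. s \<ge> 2 \<and> partial_geometry P L s 2 2 \<and> n_ec P (point_adj L) 3
              \<longrightarrow> s = 7 \<and> graph_iso P (point_adj L) (UNIV :: (z2cube \<times> z2cube) set) ls_adj)"
proof -
  have "\<forall>(P :: 'p set) L s. s \<ge> 2 \<and> partial_geometry P L s 2 2 \<and> n_ec P (point_adj L) 3
          \<longrightarrow> s = 7 \<and> graph_iso P (point_adj L) (UNIV :: (z2cube \<times> z2cube) set) ls_adj"
    using pg22.pg22_classification unfolding pg22_def by blast
  then show ?thesis using z2_geometry ls_adj_point_adj ls_graph_3ec by blast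
qed

end
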